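(* Let $u_1,\dots,u_n$ be words over $[n]$ with $u_j\in[n]^{k_j}$ ($k_j\geq0$). Then \[ P\left(\begin{bmatrix}e_{u_1}\\ \vdots\\ e_{u_n}\end{bmatrix}\right)=\sum_{j=1}^n\frac{\delta^l(l_{ju_j})[1\oplus\cdots\oplus1]}{k_j+1}, \] where $P$ is the orthogonal projection of $\mathcal{F}(\mathbb{C}^n)^n$ onto the closure of $\delta^l(\mathbb{C}^l_{\langle n\rangle})[1\oplus\cdots\oplus1]$ and $ju_j$ denotes the word obtained by prefixing the letter $j$ to $u_j$.
   Context: Let $\{e_1,\dots,e_n\}$ be an orthonormal basis of $\mathbb{C}^n$, $\{f_1,\dots,f_n\}$ the standard basis. The full Fock space is $\mathcal{F}(\mathbb{C}^n)=\mathbb{C}1\oplus\bigoplus_{k\geq1}(\mathbb{C}^n)^{\otimes k}$; for a word $w=i_1\cdots i_k$ over $[n]=\{1,\dots,n\}$, $e_w=e_{i_1}\otimes\cdots\otimes e_{i_k}$, $e_\epsilon=1$ for the empty word; $[n]^k$ is the set of words of length $k$. Let $l_je_w=e_{jw}$ be the left creation operators and $l_u=l_{u_1}\cdots l_{u_p}$ for $u=u_1\cdots u_p$. Let $\mathbb{C}^l_{\langle n\rangle}$ be the unital algebra generated by $l_1,\dots,l_n$, and $\delta^l:\mathbb{C}^l_{\langle n\rangle}\to(\mathbb{C}^l_{\langle n\rangle})^n\cong\mathbb{C}^l_{\langle n\rangle}\otimes\mathbb{C}^n$ the linear map with $\delta^l(l_{i_1}\cdots l_{i_p})=\sum_{j=1}^p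 l_{i_{j+1}}\cdots l_{i_p}l_{i_1}\cdots l_{i_{j-1}}\otimes f_{i_j}$. For a tuple $(x_1,\dots,x_n)$ of operators, $(x_1,\dots,x_n)[1\oplus\cdots\oplus1]=(x_11,\dots,x_n1)\in\mathcal{F}(\mathbb{C}^n)^n$, and $\delta^l(\mathbb{C}^l_{\langle n\rangle})[1\oplus\cdots\oplus1]$ is the set of all such images of $\delta^l(q)$, $q\in\mathbb{C}^l_{\langle n\rangle}$. Vectors of $\mathcal{F}(\mathbb{C}^n)^n$ are identified with $\mathcal{F}(\mathbb{C}^n)\otimes\mathbb{C}^n$ via $(\xi_1,\dots,\xi_n)\mapsto\sum_j\xi_j\otimes f_j$. *)

theory Defs
  imports "HOL-Analysis.Analysis"
begin

text \<open>Model of F(C^n)^n = F(C^n) (x) C^n: a vector is a function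
  x :: nat list => nat => complex, where x w j is the coefficient of e_w (x) f_j.
  Letters and components range over {1..n}.\<close>

definition words :: "nat \<Rightarrow> nat list set" where
  "words n = {w. set w \<subseteq> {1..n}}"

definition lp2 :: "nat \<Rightarrow> (nat list \<Rightarrow> nat \<Rightarrow> complex) set" where
  "lp2 n = {x. (\<forall>w j. x w j \<noteq> 0 \<longrightarrow> w \<in> words n \<and> j \<in> {1..n}) \<and>
              (\<lambda>(w, j). (cmod (x w j))\<^sup>2) summable_on UNIV}"

definition l2inner :: "(nat list \<Rightarrow> nat \<Rightarrow> complex) \<Rightarrow> (nat list \<Rightarrow> nat \<Rightarrow> complex) \<Rightarrow> complex" where
  "l2inner x y = infsum (\<lambda>(w, j). cnj (x w j) * y w j) UNIV"

definition l2norm :: "(nat list \<Rightarrow> nat \<Rightarrow> complex) \<Rightarrow> real" where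
  "l2norm x = sqrt (infsum (\<lambda>(w, j). (cmod (x w j))\<^sup>2) UNIV)"

definition l2closure :: "nat \<Rightarrow> (nat list \<Rightarrow> nat \<Rightarrow> complex) set \<Rightarrow> (nat list \<Rightarrow> nat \<Rightarrow> complex) set" where
  "l2closure n M = {x \<in> lp2 n. \<forall>\<epsilon>>0. \<exists>m\<in>M. l2norm (\<lambda>w j. x w j - m w j) < \<epsilon>}"

definition orth_proj :: "nat \<Rightarrow> (nat list \<Rightarrow> nat \<Rightarrow> complex) set \<Rightarrow> (nat list \<Rightarrow> nat \<Rightarrow> complex)
    \<Rightarrow> (nat list \<Rightarrow> nat \<Rightarrow> complex)" where
  "orth_proj n M v = (THE p. p \<in> l2closure n M \<and>
      (\<forall>m\<in>l2closure n M. l2inner m (\<lambda>w j. v w j - p w j) = 0))"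

definition basis_vec :: "nat list \<Rightarrow> nat \<Rightarrow> (nat list \<Rightarrow> nat \<Rightarrow> complex)" where
  "basis_vec w j = (\<lambda>v i. if v = w \<and> i = j then 1 else 0)"

text \<open>delta^l(l_{i_1}...l_{i_p})[1 (+) ... (+) 1]
  = sum_j e_{i_{j+1}...i_p i_1...i_{j-1}} (x) f_{i_j}  (0-based position j here).\<close>
definition delta_vec :: "nat list \<Rightarrow> (nat list \<Rightarrow> nat \<Rightarrow> complex)" where
  "delta_vec u = (\<lambda>w i. \<Sum>j<length u. basis_vec (drop (Suc j) u @ take j u) (u ! j) w i)"

text \<open>delta^l(C^l_<n>)[1 (+) ... (+) 1]: image of all noncommutative polynomials
  q = sum_u c_u l_u in the creation operators, i.e. the complex span of the delta_vec u.\<close>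
definition delta_image :: "nat \<Rightarrow> (nat list \<Rightarrow> nat \<Rightarrow> complex) set" where
  "delta_image n = {x. \<exists>U c. finite U \<and> U \<subseteq> words n \<and>
       x = (\<lambda>w i. \<Sum>u\<in>U. c u * delta_vec u w i)}"

end

theory Submission
  imports Defs
begin

(* Index the coefficient of e_w (x) f_i by the word i w.  At a word r, the vector
   delta^l(l_u)[1 (+) ... (+) 1] has as coefficient the number of cyclic rotations of u equal
   to r, so every vector of the range of delta^l, and by pointwise continuity of coefficients
   every vector of its closure, is constant on rotation classes of words.  Pairing v - P v with
   delta^l(l_u)[1 (+) ... (+) 1] then shows that the coefficient of P v at u is the mean of the
   coefficients of v over the rotations of u.  For a combination of basis vectors e_r this
   mean is attained by sum_r c_r delta^l(l_r)[1 (+) ... (+) 1] / |r|, which lies in the range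
   and leaves a residual orthogonal to every rotation invariant vector. *)

definition coeff_at :: "(nat list \<Rightarrow> nat \<Rightarrow> complex) \<Rightarrow> nat list \<Rightarrow> complex" where
  "coeff_at x u = x (tl u) (hd u)"

lemma coeff_at_Cons [simp]: "coeff_at x (i # w) = x w i"
  by (simp add: coeff_at_def)

definition rotation_invariant :: "(nat list \<Rightarrow> nat \<Rightarrow> complex) \<Rightarrow> bool" where
  "rotation_invariant x \<longleftrightarrow> (\<forall>u a. coeff_at x (rotate a u) = coeff_at x u)"

definition finitely_supported :: "(nat list \<Rightarrow> nat \<Rightarrow> complex) \<Rightarrow> bool" where
  "finitely_supported x \<longleftrightarrow> finite {(w, j). x w j \<noteq> 0}"

lemma inj_rotate: "inj (rotate n)"
  by (simp add: rotate_def inj_rotate1)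

lemma rotate_eq_nth_Cons: "a < length u \<Longrightarrow> rotate a u = u ! a # drop (Suc a) u @ take a u"
  by (simp add: rotate_drop_take Cons_nth_drop_Suc)

lemma sum_rotate_shift:
  fixes f :: "'a list \<Rightarrow> 'b::cancel_comm_monoid_add"
  shows "(\<Sum>a<length u. f (rotate (a + c) u)) = (\<Sum>a<length u. f (rotate a u))"
proof (induction c)
  case (Suc c)
  define g where "g a = f (rotate (a + c) u)" for a
  have "g (length u) = g 0"
    unfolding g_def by (metis add_0 mod_add_self1 rotate_conv_mod)
  then have "g 0 + (\<Sum>a<length u. g (Suc a)) = g 0 + (\<Sum>a<length u. g a)"
    by (metis add.commute sum.lessThan_Suc sum.lessThan_Suc_shift)
  then show ?case
    using Suc by (simp add: g_def)
qed simp

lemma delta_vec_eq_count: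
  "delta_vec u w i = (\<Sum>a<length u. if rotate a u = i # w then 1 else 0)"
  unfolding delta_vec_def basis_vec_def by (intro sum.cong) (auto simp: rotate_eq_nth_Cons)

lemma coeff_at_delta_vec:
  "r \<noteq> [] \<Longrightarrow> coeff_at (delta_vec u) r = (\<Sum>a<length u. if rotate a u = r then 1 else 0)"
  by (cases r) (simp_all add: delta_vec_eq_count)

lemma rotation_invariant_delta_vec: "rotation_invariant (delta_vec u)"
  unfolding rotation_invariant_def
proof (intro allI)
  fix r and b :: nat
  show "coeff_at (delta_vec u) (rotate b r) = coeff_at (delta_vec u) r"
  proof (cases "r = []")
    case False
    have "(\<Sum>a<length u. if rotate a u = r then 1 else 0 :: complex)
        = (\<Sum>a<length u. if rotate (a + b) u = rotate b r then 1 else 0)"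
      by (intro sum.cong refl) (metis add.commute inj_eq inj_rotate rotate_rotate)
    also have "\<dots> = (\<Sum>a<length u. if rotate a u = rotate b r then 1 else 0)"
      by (rule sum_rotate_shift)
    finally show ?thesis
      using False by (simp add: coeff_at_delta_vec)
  qed simp
qed

lemma finitely_supported_basis_vec: "finitely_supported (basis_vec w i)"
proof -
  have "{(v, j). basis_vec w i v j \<noteq> 0} = {(w, i)}"
    by (auto simp: basis_vec_def)
  then show ?thesis
    by (simp add: finitely_supported_def)
qed

lemma finitely_supported_sum:
  assumes "finite K" "\<And>k. k \<in> K \<Longrightarrow> finitely_supported (y k)"
  shows "finitely_supported (\<lambda>w j. \<Sum>k\<in>K. c k * y k w j)"
proof -
  have "{(w, j). (\<Sum>k\<in>K. c k * y k w j) \<noteq> 0} \<subseteq> (\<Union>k\<in>K. {(w, j). y k w j \<noteq> 0})"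
  proof clarsimp
    fix w j
    assume "(\<Sum>k\<in>K. c k * y k w j) \<noteq> 0"
    then obtain k where "k \<in> K" "c k * y k w j \<noteq> 0"
      by (rule sum.not_neutral_contains_not_neutral)
    then show "\<exists>k\<in>K. y k w j \<noteq> 0"
      by auto
  qed
  moreover have "finite (\<Union>k\<in>K. {(w, j). y k w j \<noteq> 0})"
    using assms by (simp add: finitely_supported_def)
  ultimately show ?thesis
    unfolding finitely_supported_def by (rule finite_subset)
qed

(* The factor 1 puts delta_vec in the shape c k * y k required by the lemmas on sums. *)
lemma delta_vec_eq_sum_basis_vec:
  "delta_vec u = (\<lambda>w j. \<Sum>a<length u. 1 * basis_vec (drop (Suc a) u @ take a u) (u ! a) w j)"
  by (simp add: delta_vec_def)

lemma finitely_supported_delta_vec: "finitely_supported (delta_vec u)"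
  unfolding delta_vec_eq_sum_basis_vec
  by (rule finitely_supported_sum) (simp_all add: finitely_supported_basis_vec)

lemma l2inner_finite_support:
  assumes "finite S" "\<And>w j. (w, j) \<notin> S \<Longrightarrow> y w j = 0"
  shows "l2inner x y = (\<Sum>(w, j)\<in>S. cnj (x w j) * y w j)"
proof -
  have "l2inner x y = infsum (\<lambda>(w, j). cnj (x w j) * y w j) S"
    unfolding l2inner_def by (intro infsum_cong_neutral) (auto simp: assms(2))
  then show ?thesis
    using assms(1) by simp
qed

lemma l2inner_sum_right:
  assumes "finite K" "\<And>k. k \<in> K \<Longrightarrow> finitely_supported (y k)"
  shows "l2inner x (\<lambda>w j. \<Sum>k\<in>K. c k * y k w j) = (\<Sum>k\<in>K. c k * l2inner x (y k))"
proof -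
  define S where "S = (\<Union>k\<in>K. {(w, j). y k w j \<noteq> 0})"
  have S: "finite S"
    using assms unfolding S_def finitely_supported_def by auto
  have y: "y k w j = 0" if "k \<in> K" "(w, j) \<notin> S" for k w j
    using that unfolding S_def by auto
  have "l2inner x (\<lambda>w j. \<Sum>k\<in>K. c k * y k w j)
      = (\<Sum>(w, j)\<in>S. \<Sum>k\<in>K. c k * (cnj (x w j) * y k w j))"
    by (subst l2inner_finite_support[OF S]) (auto simp: y sum_distrib_left mult.left_commute)
  also have "\<dots> = (\<Sum>k\<in>K. c k * (\<Sum>(w, j)\<in>S. cnj (x w j) * y k w j))"
    unfolding case_prod_unfold sum_distrib_left by (rule sum.swap)
  also have "\<dots> = (\<Sum>k\<in>K. c k * l2inner x (y k))"
    by (intro sum.cong refl) (simp add: l2inner_finite_support[OF S] y)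
  finally show ?thesis .
qed

lemma l2inner_diff_right:
  assumes "finitely_supported y" "finitely_supported z"
  shows "l2inner x (\<lambda>w j. y w j - z w j) = l2inner x y - l2inner x z"
proof -
  define S where "S = {(w, j). y w j \<noteq> 0} \<union> {(w, j). z w j \<noteq> 0}"
  have S: "finite S"
    using assms unfolding S_def finitely_supported_def by simp
  have "y w j = 0" "z w j = 0" if "(w, j) \<notin> S" for w j
    using that unfolding S_def by auto
  then show ?thesis
    by (simp add: l2inner_finite_support[OF S] ring_distribs sum_subtractf case_prod_unfold)
qed

lemma l2inner_basis_vec_right: "l2inner x (basis_vec w i) = cnj (x w i)"
  by (subst l2inner_finite_support[of "{(w, i)}"]) (auto simp: basis_vec_def)

lemma cnj_l2inner: "cnj (l2inner x y) = l2inner y x"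
  unfolding l2inner_def by (simp flip: infsum_cnj add: case_prod_unfold mult.commute)

lemma l2inner_delta_vec_right:
  "l2inner x (delta_vec u) = (\<Sum>a<length u. cnj (coeff_at x (rotate a u)))"
  unfolding delta_vec_eq_sum_basis_vec
  by (subst l2inner_sum_right) (simp_all add: finitely_supported_basis_vec l2inner_basis_vec_right
      rotate_eq_nth_Cons)

lemma l2inner_delta_vec_left:
  "l2inner (delta_vec u) y = (\<Sum>a<length u. coeff_at y (rotate a u))"
proof -
  have "l2inner (delta_vec u) y = cnj (l2inner y (delta_vec u))"
    by (simp add: cnj_l2inner)
  then show ?thesis
    by (simp add: l2inner_delta_vec_right)
qed

lemma l2inner_delta_vec_rotation_invariant:
  "rotation_invariant m \<Longrightarrow> l2inner m (delta_vec u) = of_nat (length u) * cnj (coeff_at m u)"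
  by (simp add: l2inner_delta_vec_right rotation_invariant_def)

lemma delta_vec_nonzero:
  assumes "delta_vec u w i \<noteq> 0"
  shows "\<exists>a<length u. rotate a u = i # w"
proof -
  have "(\<Sum>a<length u. if rotate a u = i # w then 1 else 0 :: complex) \<noteq> 0"
    using assms by (simp add: delta_vec_eq_count)
  then obtain a where "a \<in> {..<length u}" "(if rotate a u = i # w then 1 else 0 :: complex) \<noteq> 0"
    by (rule sum.not_neutral_contains_not_neutral)
  then show ?thesis
    by (auto split: if_splits)
qed

lemma delta_vec_nonzero_words:
  assumes "u \<in> words n" "delta_vec u w i \<noteq> 0"
  shows "w \<in> words n \<and> i \<in> {1..n}"
proof -
  obtain a where "rotate a u = i # w"
    using delta_vec_nonzero[OF assms(2)] by blast
  then have "set (i # w) = set u"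
    by (metis set_rotate)
  then show ?thesis
    using assms(1) by (auto simp: words_def)
qed

lemma finitely_supported_delta_image:
  assumes "x \<in> delta_image n"
  shows "finitely_supported x"
proof -
  obtain U c where "finite U" "x = (\<lambda>w i. \<Sum>u\<in>U. c u * delta_vec u w i)"
    using assms unfolding delta_image_def by blast
  then show ?thesis
    using finitely_supported_sum[of U delta_vec c] finitely_supported_delta_vec by simp
qed

lemma lp2_finitely_supportedI:
  assumes "finitely_supported x" "\<And>w j. x w j \<noteq> 0 \<Longrightarrow> w \<in> words n \<and> j \<in> {1..n}"
  shows "x \<in> lp2 n"
proof -
  have "finite {s \<in> UNIV. (\<lambda>(w, j). (cmod (x w j))\<^sup>2) s \<noteq> 0}"
    using assms(1) by (simp add: finitely_supported_def case_prod_unfold)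
  then show ?thesis
    using assms(2) unfolding lp2_def by (auto intro: finite_nonzero_values_imp_summable_on)
qed

lemma delta_vec_in_delta_image: "u \<in> words n \<Longrightarrow> delta_vec u \<in> delta_image n"
  unfolding delta_image_def by (intro CollectI exI[of _ "{u}"] exI[of _ "\<lambda>_. 1"]) auto

lemma delta_image_subset_lp2: "delta_image n \<subseteq> lp2 n"
proof
  fix x
  assume x: "x \<in> delta_image n"
  then obtain U c where U: "U \<subseteq> words n" and x_eq: "x = (\<lambda>w i. \<Sum>u\<in>U. c u * delta_vec u w i)"
    unfolding delta_image_def by blast
  have support: "w \<in> words n \<and> j \<in> {1..n}" if "x w j \<noteq> 0" for w j
  proof -
    have "(\<Sum>u\<in>U. c u * delta_vec u w j) \<noteq> 0"
      using that by (simp add: x_eq)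
    then obtain u where "u \<in> U" "c u * delta_vec u w j \<noteq> 0"
      by (rule sum.not_neutral_contains_not_neutral)
    then show ?thesis
      using U delta_vec_nonzero_words[of u n w j] by auto
  qed
  show "x \<in> lp2 n"
    using finitely_supported_delta_image[OF x] support by (rule lp2_finitely_supportedI)
qed

lemma delta_image_subset_l2closure: "delta_image n \<subseteq> l2closure n (delta_image n)"
  using delta_image_subset_lp2 unfolding l2closure_def
  by (auto simp: l2norm_def case_prod_unfold intro!: bexI)

lemma rotation_invariant_delta_image:
  assumes "x \<in> delta_image n"
  shows "rotation_invariant x"
proof -
  obtain U c where x_eq: "x = (\<lambda>w i. \<Sum>u\<in>U. c u * delta_vec u w i)"
    using assms unfolding delta_image_def by blast
  have "coeff_at x r = (\<Sum>u\<in>U. c u * coeff_at (delta_vec u) r)" for r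
    by (simp add: x_eq coeff_at_def)
  then show ?thesis
    using rotation_invariant_delta_vec by (simp add: rotation_invariant_def)
qed

lemma norm_coeff_at_le_l2norm:
  assumes "(\<lambda>(w, j). (cmod (y w j))\<^sup>2) summable_on UNIV"
  shows "cmod (coeff_at y u) \<le> l2norm y"
proof -
  let ?f = "\<lambda>(w, j). (cmod (y w j))\<^sup>2"
  have "infsum ?f {(tl u, hd u)} \<le> infsum ?f UNIV"
    by (rule infsum_mono_neutral) (use assms in auto)
  then show ?thesis
    unfolding l2norm_def coeff_at_def by (simp add: real_le_rsqrt)
qed

lemma summable_l2_diff_finitely_supported:
  assumes "(\<lambda>(w, j). (cmod (x w j))\<^sup>2) summable_on UNIV" "finitely_supported m"
  shows "(\<lambda>(w, j). (cmod (x w j - m w j))\<^sup>2) summable_on UNIV"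
proof -
  let ?h = "\<lambda>(w, j). (cmod (x w j - m w j))\<^sup>2 - (cmod (x w j))\<^sup>2"
  have "{s \<in> UNIV. ?h s \<noteq> 0} \<subseteq> {(w, j). m w j \<noteq> 0}"
    by auto
  then have "?h summable_on UNIV"
    using assms(2) unfolding finitely_supported_def
    by (intro finite_nonzero_values_imp_summable_on) (rule finite_subset)
  then have "(\<lambda>s. (\<lambda>(w, j). (cmod (x w j))\<^sup>2) s + ?h s) summable_on UNIV"
    using assms(1) by (rule summable_on_add[rotated])
  then show ?thesis
    by (simp add: case_prod_unfold)
qed

lemma rotation_invariant_l2closure:
  assumes "x \<in> l2closure n (delta_image n)"
  shows "rotation_invariant x"
  unfolding rotation_invariant_def
proof (intro allI)
  fix u a
  define z where "z = coeff_at x (rotate a u) - coeff_at x u"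
  show "coeff_at x (rotate a u) = coeff_at x u"
  proof (rule ccontr)
    assume "coeff_at x (rotate a u) \<noteq> coeff_at x u"
    then have "cmod z / 2 > 0"
      by (simp add: z_def)
    then obtain m where m: "m \<in> delta_image n" and close: "l2norm (\<lambda>w j. x w j - m w j) < cmod z / 2"
      using assms unfolding l2closure_def by blast
    define y where "y = (\<lambda>w j. x w j - m w j)"
    have "(\<lambda>(w, j). (cmod (y w j))\<^sup>2) summable_on UNIV"
      unfolding y_def using assms finitely_supported_delta_image[OF m]
      by (intro summable_l2_diff_finitely_supported) (auto simp: l2closure_def lp2_def)
    then have bound: "cmod (coeff_at y t) < cmod z / 2" for t
      using norm_coeff_at_le_l2norm[of y t] close unfolding y_def by linarith
    have "z = coeff_at y (rotate a u) - coeff_at y u"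
      using rotation_invariant_delta_image[OF m]
      by (simp add: z_def y_def coeff_at_def rotation_invariant_def)
    then have "cmod z \<le> cmod (coeff_at y (rotate a u)) + cmod (coeff_at y u)"
      by (simp add: norm_triangle_ineq4)
    then show False
      using bound[of "rotate a u"] bound[of u] by linarith
  qed
qed

lemma coeff_at_eq_rotation_mean:
  assumes "p \<in> l2closure n (delta_image n)"
    and "\<forall>m\<in>l2closure n (delta_image n). l2inner m (\<lambda>w j. v w j - p w j) = 0"
    and "u \<in> words n" "u \<noteq> []"
  shows "coeff_at p u = (\<Sum>a<length u. coeff_at v (rotate a u)) / of_nat (length u)"
proof -
  have "delta_vec u \<in> l2closure n (delta_image n)"
    using delta_vec_in_delta_image[OF assms(3)] delta_image_subset_l2closure by blast
  then have "0 = l2inner (delta_vec u) (\<lambda>w j. v w j - p w j)"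
    using assms(2) by simp
  also have "\<dots> = (\<Sum>a<length u. coeff_at v (rotate a u)) - (\<Sum>a<length u. coeff_at p (rotate a u))"
    by (simp add: l2inner_delta_vec_left coeff_at_def sum_subtractf)
  also have "(\<Sum>a<length u. coeff_at p (rotate a u)) = of_nat (length u) * coeff_at p u"
    using rotation_invariant_l2closure[OF assms(1)] by (simp add: rotation_invariant_def)
  finally show ?thesis
    using assms(4) by (simp add: field_simps)
qed

lemma orth_proj_delta_image_eqI:
  assumes "p \<in> l2closure n (delta_image n)"
    and "\<forall>m\<in>l2closure n (delta_image n). l2inner m (\<lambda>w j. v w j - p w j) = 0"
  shows "orth_proj n (delta_image n) v = p"
  unfolding orth_proj_def
proof (rule the_equality)
  fix p'
  assume p': "p' \<in> l2closure n (delta_image n) \<and>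
    (\<forall>m\<in>l2closure n (delta_image n). l2inner m (\<lambda>w j. v w j - p' w j) = 0)"
  show "p' = p"
  proof (intro ext)
    fix w i
    show "p' w i = p w i"
    proof (cases "w \<in> words n \<and> i \<in> {1..n}")
      case True
      then have "i # w \<in> words n"
        by (auto simp: words_def)
      then show ?thesis
        using coeff_at_eq_rotation_mean[OF assms, of "i # w"] p'
          coeff_at_eq_rotation_mean[of p' n v "i # w"] by simp
    next
      case False
      have "p \<in> lp2 n" "p' \<in> lp2 n"
        using assms(1) p' by (auto simp: l2closure_def)
      then have "p w i = 0" "p' w i = 0"
        using False unfolding lp2_def by blast+
      then show ?thesis
        by simp
    qed
  qed
qed (use assms in blast)

lemma l2inner_rotation_invariant_basis_minus_mean:
  assumes "finite W" "[] \<notin> W" "rotation_invariant m"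
  shows "l2inner m (\<lambda>w i. (\<Sum>r\<in>W. c r * basis_vec (tl r) (hd r) w i)
                          - (\<Sum>r\<in>W. c r / of_nat (length r) * delta_vec r w i)) = 0"
proof -
  let ?b = "\<lambda>w i. \<Sum>r\<in>W. c r * basis_vec (tl r) (hd r) w i"
  let ?d = "\<lambda>w i. \<Sum>r\<in>W. c r / of_nat (length r) * delta_vec r w i"
  have "finitely_supported ?b"
    by (rule finitely_supported_sum) (simp_all add: assms(1) finitely_supported_basis_vec)
  moreover have "finitely_supported ?d"
    by (rule finitely_supported_sum) (simp_all add: assms(1) finitely_supported_delta_vec)
  ultimately have "l2inner m (\<lambda>w i. ?b w i - ?d w i) = l2inner m ?b - l2inner m ?d"
    by (rule l2inner_diff_right)
  also have "l2inner m ?b = (\<Sum>r\<in>W. c r * l2inner m (basis_vec (tl r) (hd r)))"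
    by (rule l2inner_sum_right) (simp_all add: assms(1) finitely_supported_basis_vec)
  also have "l2inner m ?d = (\<Sum>r\<in>W. c r / of_nat (length r) * l2inner m (delta_vec r))"
    by (rule l2inner_sum_right) (simp_all add: assms(1) finitely_supported_delta_vec)
  also have "\<dots> = (\<Sum>r\<in>W. c r * l2inner m (basis_vec (tl r) (hd r)))"
  proof (rule sum.cong[OF refl])
    fix r
    assume "r \<in> W"
    then have "length r \<noteq> 0"
      using assms(2) by auto
    then show "c r / of_nat (length r) * l2inner m (delta_vec r)
        = c r * l2inner m (basis_vec (tl r) (hd r))"
      by (simp add: l2inner_delta_vec_rotation_invariant[OF assms(3)] l2inner_basis_vec_right
          coeff_at_def)
  qed
  finally show ?thesis
    by simp
qed

lemma orth_proj_delta_image_basis_combination: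
  assumes "finite W" "W \<subseteq> words n" "[] \<notin> W"
  shows "orth_proj n (delta_image n) (\<lambda>w i. if i # w \<in> W then c (i # w) else 0)
       = (\<lambda>w i. \<Sum>r\<in>W. c r * delta_vec r w i / of_nat (length r))"
    (is "orth_proj n _ ?v = ?q")
proof (rule orth_proj_delta_image_eqI)
  have q_eq: "?q = (\<lambda>w i. \<Sum>r\<in>W. c r / of_nat (length r) * delta_vec r w i)"
    by simp
  have "?q \<in> delta_image n"
    unfolding delta_image_def
    by (intro CollectI exI[of _ W] exI[of _ "\<lambda>r. c r / of_nat (length r)"] conjI assms(1,2) q_eq)
  then show "?q \<in> l2closure n (delta_image n)"
    using delta_image_subset_l2closure by blast
  have v_eq: "?v w i = (\<Sum>r\<in>W. c r * basis_vec (tl r) (hd r) w i)" for w i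
  proof -
    have "c r * basis_vec (tl r) (hd r) w i = (if r = i # w then c r else 0)" if "r \<in> W" for r
      using that assms(3) by (cases r) (auto simp: basis_vec_def)
    then have "(\<Sum>r\<in>W. c r * basis_vec (tl r) (hd r) w i) = (\<Sum>r\<in>W. if r = i # w then c r else 0)"
      by (rule sum.cong[OF refl])
    then show ?thesis
      using assms(1) by simp
  qed
  have residual_eq: "(\<lambda>w j. ?v w j - ?q w j)
      = (\<lambda>w i. (\<Sum>r\<in>W. c r * basis_vec (tl r) (hd r) w i)
                - (\<Sum>r\<in>W. c r / of_nat (length r) * delta_vec r w i))"
    by (intro ext) (simp add: v_eq)
  show "\<forall>m\<in>l2closure n (delta_image n). l2inner m (\<lambda>w j. ?v w j - ?q w j) = 0"
  proof
    fix m
    assume "m \<in> l2closure n (delta_image n)"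
    then have "rotation_invariant m"
      by (rule rotation_invariant_l2closure)
    then show "l2inner m (\<lambda>w j. ?v w j - ?q w j) = 0"
      unfolding residual_eq by (rule l2inner_rotation_invariant_basis_minus_mean[OF assms(1,3)])
  qed
qed

theorem corollary3p4:
  fixes n :: nat and us :: "nat \<Rightarrow> nat list"
  assumes "n \<ge> 1"
    and "\<And>j. j \<in> {1..n} \<Longrightarrow> us j \<in> words n"
  shows "orth_proj n (delta_image n)
           (\<lambda>w j. if j \<in> {1..n} \<and> w = us j then 1 else 0)
         = (\<lambda>w i. \<Sum>j=1..n. delta_vec (j # us j) w i / of_nat (length (us j) + 1))"
proof -
  define W where "W = (\<lambda>j. j # us j) ` {1..n}"
  have "W \<subseteq> words n"
    using assms(2) unfolding W_def words_def by fastforce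
  then have W: "finite W" "W \<subseteq> words n" "[] \<notin> W"
    by (auto simp: W_def)
  have v_eq: "(\<lambda>w j. if j \<in> {1..n} \<and> w = us j then 1 else 0)
      = (\<lambda>w i. if i # w \<in> W then 1 else 0 :: complex)"
    by (intro ext) (auto simp: W_def image_iff)
  have "inj_on (\<lambda>j. j # us j) {1..n}"
    by (rule inj_onI) simp
  then have q_eq: "(\<lambda>w i. \<Sum>j=1..n. delta_vec (j # us j) w i / of_nat (length (us j) + 1))
      = (\<lambda>w i. \<Sum>r\<in>W. delta_vec r w i / of_nat (length r))"
    by (simp add: W_def sum.reindex)
  have "orth_proj n (delta_image n) (\<lambda>w i. if i # w \<in> W then 1 else 0)
      = (\<lambda>w i. \<Sum>r\<in>W. delta_vec r w i / of_nat (length r))"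
    using orth_proj_delta_image_basis_combination[OF W, of "\<lambda>_. 1"] by simp
  then show ?thesis
    unfolding v_eq q_eq .
qed

end
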